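(* Let $A, C, D$ be binary random variables, with $A$ taking values $a,\overline{a}$, $C$ taking values $c,\overline{c}$, $D$ taking values $d,\overline{d}$, and let $Y$ be a real random variable with finite expectation. Suppose the joint distribution factorizes as \[ p(A,C,D,Y)=p(C)\,p(D\mid C)\,p(A\mid C)\,p(Y\mid A,C), \] and that every event $\{A=x, C=y, D=z\}$ has positive probability. Let $p(c)=0.5$ and $p(a\mid c)=p(\overline{a}\mid\overline{c})=p(d\mid c)=p(\overline{d}\mid\overline{c})\ge 0.5$. If \[ E[Y|a,c]-E[Y|a,\overline{c}]\ \le\ E[Y|\overline{a},\overline{c}]-E[Y|\overline{a},c]\ \le\ 0, \] then $RD_{crude}\le RD_{obs}\le RD_{true}$.
   Context: $RD_{true}=E[Y|a,c]p(c)+E[Y|a,\overline{c}]p(\overline{c})-E[Y|\overline{a},c]p(c)-E[Y|\overline{a},\overline{c}]p(\overline{c})$; $RD_{crude}=E[Y|a]-E[Y|\overline{a}]$; $RD_{obs}=E[Y|a,d]p(d)+E[Y|a,\overline{d}]p(\overline{d})-E[Y|\overline{a},d]p(d)-E[Y|\overline{a},\overline{d}]p(\overline{d})$. *)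

theory Defs
  imports "HOL-Probability.Probability"
begin

text \<open>Binary random variables are boolean-valued functions on the sample space;
  value True stands for a (resp. c, d), False for the barred value.\<close>

definition Pr :: "'s measure \<Rightarrow> ('s \<Rightarrow> bool) \<Rightarrow> real" where
  "Pr M P = measure M {\<omega> \<in> space M. P \<omega>}"

definition cPr :: "'s measure \<Rightarrow> ('s \<Rightarrow> bool) \<Rightarrow> ('s \<Rightarrow> bool) \<Rightarrow> real" where
  "cPr M P Q = Pr M (\<lambda>\<omega>. P \<omega> \<and> Q \<omega>) / Pr M Q"

definition cE :: "'s measure \<Rightarrow> ('s \<Rightarrow> real) \<Rightarrow> ('s \<Rightarrow> bool) \<Rightarrow> real" where
  "cE M Y Q = (\<integral>\<omega>. indicator {\<omega> \<in> space M. Q \<omega>} \<omega> * Y \<omega> \<partial>M) / Pr M Q"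

definition E2 :: "'s measure \<Rightarrow> ('s \<Rightarrow> real) \<Rightarrow> ('s \<Rightarrow> bool) \<Rightarrow> bool \<Rightarrow> ('s \<Rightarrow> bool) \<Rightarrow> bool \<Rightarrow> real" where
  "E2 M Y A x V v = cE M Y (\<lambda>\<omega>. A \<omega> = x \<and> V \<omega> = v)"

definition RD_true :: "'s measure \<Rightarrow> ('s \<Rightarrow> bool) \<Rightarrow> ('s \<Rightarrow> bool) \<Rightarrow> ('s \<Rightarrow> real) \<Rightarrow> real" where
  "RD_true M A C Y =
     E2 M Y A True C True * Pr M C + E2 M Y A True C False * Pr M (\<lambda>\<omega>. \<not> C \<omega>)
   - E2 M Y A False C True * Pr M C - E2 M Y A False C False * Pr M (\<lambda>\<omega>. \<not> C \<omega>)"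

definition RD_crude :: "'s measure \<Rightarrow> ('s \<Rightarrow> bool) \<Rightarrow> ('s \<Rightarrow> real) \<Rightarrow> real" where
  "RD_crude M A Y = cE M Y A - cE M Y (\<lambda>\<omega>. \<not> A \<omega>)"

definition RD_obs :: "'s measure \<Rightarrow> ('s \<Rightarrow> bool) \<Rightarrow> ('s \<Rightarrow> bool) \<Rightarrow> ('s \<Rightarrow> real) \<Rightarrow> real" where
  "RD_obs M A D Y =
     E2 M Y A True D True * Pr M D + E2 M Y A True D False * Pr M (\<lambda>\<omega>. \<not> D \<omega>)
   - E2 M Y A False D True * Pr M D - E2 M Y A False D False * Pr M (\<lambda>\<omega>. \<not> D \<omega>)"

end

theory Submission
  imports Defs
begin

(* Under the factorization, D is independent of (A, Y) given C, so the partial expectation of Y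
   on a cell {A = x, C = y, D = z} is p(z | y) times the one on {A = x, C = y}.  Writing
   e_xy = E[Y | A = x, C = y] and Delta = (e_11 - e_10) + (e_01 - e_00) for the summed effect
   of C, the symmetric parameters then give
     RD_crude = RD_true + (2q - 1) Delta / 2,
     RD_obs   = RD_true + (2q - 1) Delta / (4 (q^2 + (1 - q)^2)).
   The first hypothesis says Delta <= 0, so with q >= 1/2 both biases are nonpositive, and
   4 (q^2 + (1 - q)^2) >= 2 makes the bias after adjusting for the proxy D the smaller one. *)

definition partial_exp :: "'s measure \<Rightarrow> ('s \<Rightarrow> real) \<Rightarrow> ('s \<Rightarrow> bool) \<Rightarrow> real" where
  "partial_exp M Y P = (\<integral>\<omega>. indicator {\<omega> \<in> space M. P \<omega>} \<omega> * Y \<omega> \<partial>M)"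

lemma cE_eq: "cE M Y P = partial_exp M Y P / Pr M P"
  by (simp add: cE_def partial_exp_def)

lemma integral_indicator_mult_eq_integral_distr:
  fixes Y :: "'s \<Rightarrow> real"
  assumes [measurable]: "S \<in> sets M" "Y \<in> borel_measurable M"
  shows "(\<integral>\<omega>. indicator S \<omega> * Y \<omega> \<partial>M) = (\<integral>x. x \<partial>distr (density M (indicator S)) borel Y)"
proof -
  have "density M (indicator S) = density M (\<lambda>\<omega>. ennreal (indicator S \<omega>))"
    by (rule density_cong) (auto split: split_indicator)
  then show ?thesis
    by (simp add: integral_distr integral_density)
qed

lemma emeasure_distr_density_indicator:
  fixes Y :: "'s \<Rightarrow> real"
  assumes [measurable]: "S \<in> sets M" "Y \<in> borel_measurable M" "B \<in> sets borel"
  shows "emeasure (distr (density M (indicator S)) borel Y) B = emeasure M (S \<inter> Y -` B)"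
proof -
  have "S \<inter> (Y -` B \<inter> space M) = S \<inter> Y -` B"
    using sets.sets_into_space[OF assms(1)] by blast
  then show ?thesis
    by (simp add: emeasure_distr emeasure_restricted)
qed

lemma partial_exp_proportional:
  fixes Y :: "'s \<Rightarrow> real"
  assumes "finite_measure M"
    and [measurable]: "Measurable.pred M P" "Measurable.pred M Q" "Y \<in> borel_measurable M"
    and "k \<ge> 0"
    and Pr_eq: "\<And>B. B \<in> sets borel \<Longrightarrow>
      Pr M (\<lambda>\<omega>. P \<omega> \<and> Y \<omega> \<in> B) = k * Pr M (\<lambda>\<omega>. Q \<omega> \<and> Y \<omega> \<in> B)"
  shows "partial_exp M Y P = k * partial_exp M Y Q"
proof -
  interpret finite_measure M by fact
  define S T where "S = {\<omega> \<in> space M. P \<omega>}" and "T = {\<omega> \<in> space M. Q \<omega>}"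
  have [measurable]: "S \<in> sets M" "T \<in> sets M" unfolding S_def T_def by measurable
  have "distr (density M (indicator S)) borel Y
      = density (distr (density M (indicator T)) borel Y) (\<lambda>_. ennreal k)"
  proof (rule measure_eqI)
    fix B assume "B \<in> sets (distr (density M (indicator S)) borel Y)"
    then have [measurable]: "B \<in> sets borel" by simp
    have "S \<inter> Y -` B = {\<omega> \<in> space M. P \<omega> \<and> Y \<omega> \<in> B}"
      and "T \<inter> Y -` B = {\<omega> \<in> space M. Q \<omega> \<and> Y \<omega> \<in> B}"
      unfolding S_def T_def by auto
    then show "emeasure (distr (density M (indicator S)) borel Y) B =
        emeasure (density (distr (density M (indicator T)) borel Y) (\<lambda>_. ennreal k)) B"
      using Pr_eq[of B] \<open>k \<ge> 0\<close>
      by (simp add: emeasure_density_const emeasure_distr_density_indicator emeasure_eq_measure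
          Pr_def ennreal_mult)
  qed simp
  then show ?thesis
    unfolding partial_exp_def S_def[symmetric] T_def[symmetric]
    using \<open>k \<ge> 0\<close> by (simp add: integral_indicator_mult_eq_integral_distr integral_density)
qed

lemma Pr_split:
  assumes "finite_measure M" and [measurable]: "Measurable.pred M P" "Measurable.pred M Q"
  shows "Pr M P = Pr M (\<lambda>\<omega>. P \<omega> \<and> Q \<omega>) + Pr M (\<lambda>\<omega>. P \<omega> \<and> \<not> Q \<omega>)"
proof -
  have "{\<omega> \<in> space M. P \<omega>} = {\<omega> \<in> space M. P \<omega> \<and> Q \<omega>} \<union> {\<omega> \<in> space M. P \<omega> \<and> \<not> Q \<omega>}"
    by blast
  then show ?thesis
    unfolding Pr_def by (simp add: finite_measure.finite_measure_Union[OF assms(1)] Int_def)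
qed

lemma partial_exp_split:
  fixes Y :: "'s \<Rightarrow> real"
  assumes "integrable M Y" and [measurable]: "Measurable.pred M P" "Measurable.pred M Q"
  shows "partial_exp M Y P = partial_exp M Y (\<lambda>\<omega>. P \<omega> \<and> Q \<omega>) + partial_exp M Y (\<lambda>\<omega>. P \<omega> \<and> \<not> Q \<omega>)"
proof -
  have integrable_part: "integrable M (\<lambda>\<omega>. indicator S \<omega> * Y \<omega>)" if "S \<in> sets M" for S
    using integrable_mult_indicator[OF that assms(1)] by simp
  have "partial_exp M Y P = (\<integral>\<omega>. indicator {\<omega> \<in> space M. P \<omega> \<and> Q \<omega>} \<omega> * Y \<omega>
      + indicator {\<omega> \<in> space M. P \<omega> \<and> \<not> Q \<omega>} \<omega> * Y \<omega> \<partial>M)"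
    unfolding partial_exp_def
    by (rule Bochner_Integration.integral_cong) (auto split: split_indicator)
  then show ?thesis
    unfolding partial_exp_def
    by (simp add: Bochner_Integration.integral_add integrable_part)
qed

locale symmetric_proxy_model = prob_space M for M :: "'s measure" +
  fixes A C D :: "'s \<Rightarrow> bool" and Y :: "'s \<Rightarrow> real" and q :: real
  assumes A_measurable [measurable]: "A \<in> measurable M (count_space UNIV)"
    and C_measurable [measurable]: "C \<in> measurable M (count_space UNIV)"
    and D_measurable [measurable]: "D \<in> measurable M (count_space UNIV)"
    and integrable_Y: "integrable M Y"
    and factorization: "\<And>x y z B. B \<in> sets borel \<Longrightarrow>
        Pr M (\<lambda>\<omega>. A \<omega> = x \<and> C \<omega> = y \<and> D \<omega> = z \<and> Y \<omega> \<in> B)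
        = Pr M (\<lambda>\<omega>. C \<omega> = y) * cPr M (\<lambda>\<omega>. D \<omega> = z) (\<lambda>\<omega>. C \<omega> = y)
          * cPr M (\<lambda>\<omega>. A \<omega> = x) (\<lambda>\<omega>. C \<omega> = y)
          * cPr M (\<lambda>\<omega>. Y \<omega> \<in> B) (\<lambda>\<omega>. A \<omega> = x \<and> C \<omega> = y)"
    and Pr_ACD_pos: "\<And>x y z. Pr M (\<lambda>\<omega>. A \<omega> = x \<and> C \<omega> = y \<and> D \<omega> = z) > 0"
    and Pr_C: "Pr M C = 1/2"
    and cPr_A_C: "cPr M A C = q"
    and cPr_not_A_not_C: "cPr M (\<lambda>\<omega>. \<not> A \<omega>) (\<lambda>\<omega>. \<not> C \<omega>) = q"
    and cPr_D_C: "cPr M D C = q"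
    and cPr_not_D_not_C: "cPr M (\<lambda>\<omega>. \<not> D \<omega>) (\<lambda>\<omega>. \<not> C \<omega>) = q"
begin

definition match_prob :: "bool \<Rightarrow> bool \<Rightarrow> real" where
  "match_prob x y = (if x = y then q else 1 - q)"

definition confounder_effect :: real where
  "confounder_effect = (E2 M Y A True C True - E2 M Y A True C False)
     + (E2 M Y A False C True - E2 M Y A False C False)"

lemma Y_measurable [measurable]: "Y \<in> borel_measurable M"
  using integrable_Y by (rule borel_measurable_integrable)

lemma Pr_C_eq: "Pr M (\<lambda>\<omega>. C \<omega> = y) = 1/2"
proof -
  have "1 = Pr M C + Pr M (\<lambda>\<omega>. \<not> C \<omega>)"
    using Pr_split[OF finite_measure_axioms, of "\<lambda>_. True" C] by (simp add: Pr_def prob_space)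
  then show ?thesis
    using Pr_C by (cases y) simp_all
qed

lemma cPr_eq_match_prob:
  assumes [measurable]: "V \<in> measurable M (count_space UNIV)"
    and "cPr M V C = q" "cPr M (\<lambda>\<omega>. \<not> V \<omega>) (\<lambda>\<omega>. \<not> C \<omega>) = q"
  shows "cPr M (\<lambda>\<omega>. V \<omega> = x) (\<lambda>\<omega>. C \<omega> = y) = match_prob x y"
proof -
  have "Pr M (\<lambda>\<omega>. C \<omega> = y) = Pr M (\<lambda>\<omega>. C \<omega> = y \<and> V \<omega>) + Pr M (\<lambda>\<omega>. C \<omega> = y \<and> \<not> V \<omega>)"
    by (rule Pr_split[OF finite_measure_axioms]) measurable
  then show ?thesis
    using assms(2,3) Pr_C_eq[of y] unfolding match_prob_def cPr_def
    by (cases x; cases y) (auto simp: field_simps conj_commute)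
qed

lemma Pr_AC: "Pr M (\<lambda>\<omega>. A \<omega> = x \<and> C \<omega> = y) = match_prob x y / 2"
  using cPr_eq_match_prob[OF A_measurable cPr_A_C cPr_not_A_not_C, of x y] Pr_C_eq[of y]
  unfolding cPr_def by simp

lemma match_prob_pos: "0 < match_prob x y"
proof -
  have "Pr M (\<lambda>\<omega>. A \<omega> = x \<and> C \<omega> = y) = Pr M (\<lambda>\<omega>. A \<omega> = x \<and> C \<omega> = y \<and> D \<omega>)
      + Pr M (\<lambda>\<omega>. A \<omega> = x \<and> C \<omega> = y \<and> \<not> D \<omega>)"
    using Pr_split[OF finite_measure_axioms, of "\<lambda>\<omega>. A \<omega> = x \<and> C \<omega> = y" D] by simp
  then show ?thesis
    using Pr_ACD_pos[of x y True] Pr_ACD_pos[of x y False] Pr_AC[of x y] by simp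
qed

lemma Pr_ACD_Y:
  assumes "B \<in> sets borel"
  shows "Pr M (\<lambda>\<omega>. (A \<omega> = x \<and> C \<omega> = y \<and> D \<omega> = z) \<and> Y \<omega> \<in> B)
    = match_prob z y * Pr M (\<lambda>\<omega>. (A \<omega> = x \<and> C \<omega> = y) \<and> Y \<omega> \<in> B)"
proof -
  have "(\<lambda>\<omega>. Y \<omega> \<in> B \<and> A \<omega> = x \<and> C \<omega> = y) = (\<lambda>\<omega>. (A \<omega> = x \<and> C \<omega> = y) \<and> Y \<omega> \<in> B)"
    by auto
  then show ?thesis
    using factorization[OF assms, of x y z] match_prob_pos[of x y]
      cPr_eq_match_prob[OF A_measurable cPr_A_C cPr_not_A_not_C, of x y]
      cPr_eq_match_prob[OF D_measurable cPr_D_C cPr_not_D_not_C, of z y]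
    unfolding cPr_def[of M "\<lambda>\<omega>. Y \<omega> \<in> B"] Pr_AC Pr_C_eq by simp
qed

lemma Pr_ACD: "Pr M (\<lambda>\<omega>. A \<omega> = x \<and> C \<omega> = y \<and> D \<omega> = z) = match_prob z y * match_prob x y / 2"
  using Pr_ACD_Y[of UNIV x y z] by (simp add: Pr_AC)

lemma partial_exp_AC:
  "partial_exp M Y (\<lambda>\<omega>. A \<omega> = x \<and> C \<omega> = y) = match_prob x y / 2 * E2 M Y A x C y"
  using match_prob_pos[of x y] by (simp add: E2_def cE_def partial_exp_def Pr_AC)

lemma partial_exp_ACD:
  "partial_exp M Y (\<lambda>\<omega>. A \<omega> = x \<and> C \<omega> = y \<and> D \<omega> = z)
    = match_prob z y * partial_exp M Y (\<lambda>\<omega>. A \<omega> = x \<and> C \<omega> = y)"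
  using finite_measure_axioms Y_measurable match_prob_pos[of z y] Pr_ACD_Y
  by (intro partial_exp_proportional) auto

lemma E2_AD:
  "E2 M Y A x D z =
    (match_prob z True * match_prob x True * E2 M Y A x C True
      + match_prob z False * match_prob x False * E2 M Y A x C False)
    / (match_prob z True * match_prob x True + match_prob z False * match_prob x False)"
proof -
  have "partial_exp M Y (\<lambda>\<omega>. A \<omega> = x \<and> D \<omega> = z)
      = partial_exp M Y (\<lambda>\<omega>. A \<omega> = x \<and> C \<omega> = True \<and> D \<omega> = z)
        + partial_exp M Y (\<lambda>\<omega>. A \<omega> = x \<and> C \<omega> = False \<and> D \<omega> = z)"
    using partial_exp_split[OF integrable_Y, of "\<lambda>\<omega>. A \<omega> = x \<and> D \<omega> = z" C]
    by (simp add: conj_ac)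
  moreover have "Pr M (\<lambda>\<omega>. A \<omega> = x \<and> D \<omega> = z)
      = Pr M (\<lambda>\<omega>. A \<omega> = x \<and> C \<omega> = True \<and> D \<omega> = z)
        + Pr M (\<lambda>\<omega>. A \<omega> = x \<and> C \<omega> = False \<and> D \<omega> = z)"
    using Pr_split[OF finite_measure_axioms, of "\<lambda>\<omega>. A \<omega> = x \<and> D \<omega> = z" C]
    by (simp add: conj_ac)
  ultimately have "E2 M Y A x D z =
      (match_prob z True * (match_prob x True / 2 * E2 M Y A x C True)
        + match_prob z False * (match_prob x False / 2 * E2 M Y A x C False))
      / (match_prob z True * match_prob x True / 2 + match_prob z False * match_prob x False / 2)"
    using partial_exp_ACD[of x True z] partial_exp_ACD[of x False z]
      partial_exp_AC[of x True] partial_exp_AC[of x False] Pr_ACD[of x True z] Pr_ACD[of x False z]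
    by (simp add: E2_def cE_eq)
  moreover have "0 < match_prob z True * match_prob x True + match_prob z False * match_prob x False"
    by (intro add_pos_pos mult_pos_pos match_prob_pos)
  ultimately show ?thesis
    by (simp add: field_simps)
qed

lemma Pr_D_eq: "Pr M (\<lambda>\<omega>. D \<omega> = z) = 1/2"
proof -
  have "Pr M (\<lambda>\<omega>. D \<omega> = z) = Pr M (\<lambda>\<omega>. D \<omega> = z \<and> C \<omega>) + Pr M (\<lambda>\<omega>. D \<omega> = z \<and> \<not> C \<omega>)"
    by (rule Pr_split[OF finite_measure_axioms]) measurable
  then show ?thesis
    using cPr_eq_match_prob[OF D_measurable cPr_D_C cPr_not_D_not_C, of z True]
      cPr_eq_match_prob[OF D_measurable cPr_D_C cPr_not_D_not_C, of z False]
    unfolding cPr_def Pr_C_eq match_prob_def by (cases z) simp_all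
qed

lemma cE_A:
  "cE M Y (\<lambda>\<omega>. A \<omega> = x)
    = match_prob x True * E2 M Y A x C True + match_prob x False * E2 M Y A x C False"
proof -
  have split_exp: "partial_exp M Y (\<lambda>\<omega>. A \<omega> = x) = partial_exp M Y (\<lambda>\<omega>. A \<omega> = x \<and> C \<omega> = True)
      + partial_exp M Y (\<lambda>\<omega>. A \<omega> = x \<and> C \<omega> = False)"
    using partial_exp_split[OF integrable_Y, of "\<lambda>\<omega>. A \<omega> = x" C] by simp
  have split_Pr: "Pr M (\<lambda>\<omega>. A \<omega> = x)
      = Pr M (\<lambda>\<omega>. A \<omega> = x \<and> C \<omega> = True) + Pr M (\<lambda>\<omega>. A \<omega> = x \<and> C \<omega> = False)"
    using Pr_split[OF finite_measure_axioms, of "\<lambda>\<omega>. A \<omega> = x" C] by simp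
  have "cE M Y (\<lambda>\<omega>. A \<omega> = x) =
      (match_prob x True / 2 * E2 M Y A x C True + match_prob x False / 2 * E2 M Y A x C False)
      / (match_prob x True / 2 + match_prob x False / 2)"
    unfolding cE_eq split_exp split_Pr partial_exp_AC Pr_AC ..
  also have "match_prob x True / 2 + match_prob x False / 2 = 1 / 2"
    unfolding match_prob_def by simp
  finally show ?thesis
    by simp
qed

lemma Pr_not_C: "Pr M (\<lambda>\<omega>. \<not> C \<omega>) = 1/2"
  using Pr_C_eq[of False] by simp

lemma RD_true_eq:
  "RD_true M A C Y = (E2 M Y A True C True + E2 M Y A True C False
    - E2 M Y A False C True - E2 M Y A False C False) / 2"
  by (simp add: RD_true_def Pr_C Pr_not_C)

lemma RD_crude_bias: "RD_crude M A Y = RD_true M A C Y + (2*q - 1) * confounder_effect / 2"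
  using cE_A[of True] cE_A[of False]
  by (simp add: RD_crude_def RD_true_eq confounder_effect_def match_prob_def field_simps)

lemma RD_obs_bias:
  "RD_obs M A D Y = RD_true M A C Y + (2*q - 1) * confounder_effect / (4 * (q\<^sup>2 + (1 - q)\<^sup>2))"
proof -
  define w where "w = q\<^sup>2 + (1 - q)\<^sup>2"
  have "0 < q" "0 < 1 - q"
    using match_prob_pos[of True True] match_prob_pos[of True False] by (simp_all add: match_prob_def)
  then have "0 < w"
    unfolding w_def by (intro add_pos_nonneg) simp_all
  have weights: "q\<^sup>2 = (w + (2*q - 1)) / 2" "(1 - q)\<^sup>2 = (w - (2*q - 1)) / 2"
    unfolding w_def by (simp_all add: power2_eq_square algebra_simps)
  have E_a_d: "E2 M Y A True D True = (q\<^sup>2 * E2 M Y A True C True + (1 - q)\<^sup>2 * E2 M Y A True C False) / w"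
    and E_na_nd: "E2 M Y A False D False = ((1 - q)\<^sup>2 * E2 M Y A False C True + q\<^sup>2 * E2 M Y A False C False) / w"
    by (simp_all add: E2_AD match_prob_def w_def power2_eq_square)
  have E_a_nd: "E2 M Y A True D False = (E2 M Y A True C True + E2 M Y A True C False) / 2"
    and E_na_d: "E2 M Y A False D True = (E2 M Y A False C True + E2 M Y A False C False) / 2"
    using \<open>0 < q\<close> \<open>0 < 1 - q\<close> by (simp_all add: E2_AD match_prob_def field_simps)
  have Pr_D: "Pr M D = 1/2" and Pr_not_D: "Pr M (\<lambda>\<omega>. \<not> D \<omega>) = 1/2"
    using Pr_D_eq[of True] Pr_D_eq[of False] by simp_all
  have "RD_obs M A D Y = (E2 M Y A True D True + E2 M Y A True D False
      - E2 M Y A False D True - E2 M Y A False D False) / 2"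
    unfolding RD_obs_def Pr_D Pr_not_D by simp
  also have "\<dots> = RD_true M A C Y + (2*q - 1) * confounder_effect / (4 * w)"
    unfolding E_a_d E_na_nd E_a_nd E_na_d RD_true_eq confounder_effect_def weights
    using \<open>0 < w\<close> by (simp add: field_simps)
  finally show ?thesis
    unfolding w_def .
qed

end
theorem theorem3:
  fixes M :: "'s measure" and A C D :: "'s \<Rightarrow> bool" and Y :: "'s \<Rightarrow> real" and q :: real
  assumes "prob_space M"
    and "A \<in> measurable M (count_space UNIV)"
    and "C \<in> measurable M (count_space UNIV)"
    and "D \<in> measurable M (count_space UNIV)"
    and "Y \<in> borel_measurable M"
    and "integrable M Y"
    and factor: "\<And>x y z B. B \<in> sets borel \<Longrightarrow>
        Pr M (\<lambda>\<omega>. A \<omega> = x \<and> C \<omega> = y \<and> D \<omega> = z \<and> Y \<omega> \<in> B)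
        = Pr M (\<lambda>\<omega>. C \<omega> = y) * cPr M (\<lambda>\<omega>. D \<omega> = z) (\<lambda>\<omega>. C \<omega> = y)
          * cPr M (\<lambda>\<omega>. A \<omega> = x) (\<lambda>\<omega>. C \<omega> = y)
          * cPr M (\<lambda>\<omega>. Y \<omega> \<in> B) (\<lambda>\<omega>. A \<omega> = x \<and> C \<omega> = y)"
    and pos: "\<And>x y z. Pr M (\<lambda>\<omega>. A \<omega> = x \<and> C \<omega> = y \<and> D \<omega> = z) > 0"
    and pc: "Pr M C = 1/2"
    and q1: "cPr M A C = q"
    and q2: "cPr M (\<lambda>\<omega>. \<not> A \<omega>) (\<lambda>\<omega>. \<not> C \<omega>) = q"
    and q3: "cPr M D C = q"
    and q4: "cPr M (\<lambda>\<omega>. \<not> D \<omega>) (\<lambda>\<omega>. \<not> C \<omega>) = q"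
    and q_ge: "q \<ge> 1/2"
    and h1: "E2 M Y A True C True - E2 M Y A True C False
             \<le> E2 M Y A False C False - E2 M Y A False C True"
    and h2: "E2 M Y A False C False - E2 M Y A False C True \<le> 0"
  shows "RD_crude M A Y \<le> RD_obs M A D Y \<and> RD_obs M A D Y \<le> RD_true M A C Y"
proof -
  interpret symmetric_proxy_model M A C D Y q
    using assms unfolding symmetric_proxy_model_def symmetric_proxy_model_axioms_def by blast
  have "confounder_effect \<le> 0"
    using h1 by (simp add: confounder_effect_def)
  then have bias: "(2*q - 1) * confounder_effect \<le> 0"
    using q_ge by (intro mult_nonneg_nonpos) simp_all
  have "q\<^sup>2 + (1 - q)\<^sup>2 = 1/2 + 2 * (q - 1/2)\<^sup>2"
    by (simp add: power2_eq_square algebra_simps)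
  then have w: "2 \<le> 4 * (q\<^sup>2 + (1 - q)\<^sup>2)"
    by simp
  have "(2*q - 1) * confounder_effect / 2 \<le> (2*q - 1) * confounder_effect / (4 * (q\<^sup>2 + (1 - q)\<^sup>2))"
    using w by (intro divide_left_mono_neg[OF _ bias]) simp_all
  moreover have "(2*q - 1) * confounder_effect / (4 * (q\<^sup>2 + (1 - q)\<^sup>2)) \<le> 0"
    using w bias by (intro divide_nonpos_pos) simp_all
  ultimately show ?thesis
    unfolding RD_crude_bias RD_obs_bias by simp
qed

end
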